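(* Assume $\ell=d$ and that $B_1,B_2,R_1,R_2$ (and $B_1+\bar B_1,B_2+\bar B_2,R_1+\bar R_1,R_2+\bar R_2$) are invertible. Let $P^o\in\mathbb R^{d\times d}$ solve $$P^o=\gamma(A^\top P^o+2Q)\big(A+(B_1\Gamma_1+B_2\Gamma_2)P^o\big),\qquad \Gamma_1=-\tfrac12R_1^{-1}B_1^\top,\ \Gamma_2=\tfrac12R_2^{-1}B_2^\top,$$ and set $P^c=\frac12A^\top P^o+Q$. If $A^\top P^o=(P^o)^\top A$ and the symmetric matrices $P^c$ and $(P^c)^{-1}+\gamma(B_1R_1^{-1}B_1^\top-B_2R_2^{-1}B_2^\top)$ are invertible, then $P^c\in\mathcal S^d$ is a solution of $0=\mathcal M(P^c)-\mathcal L(P^c)\mathcal N(P^c)^{-1}\mathcal L(P^c)^\top$.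
   Context: $\mathcal S^d$: symmetric $d\times d$ matrices. Fix $d\ge1$, $\gamma\in(0,1)$, $A,\bar A\in\mathbb R^{d\times d}$, $B_1,\bar B_1,B_2,\bar B_2\in\mathbb R^{d\times d}$, $Q\in\mathcal S^d$, symmetric $R_1,\bar R_1,R_2,\bar R_2\in\mathbb R^{d\times d}$. For $P\in\mathcal S^d$: $\mathcal M(P)=\gamma A^\top PA-P+Q$, $\mathcal L_i(P)=\gamma A^\top PB_i$, $\mathcal L_{12}(P)=\gamma B_1^\top PB_2$, $\mathcal N_1(P)=\gamma B_1^\top PB_1+R_1$, $\mathcal N_2(P)=\gamma B_2^\top PB_2-R_2$, $\mathcal L(P)=[\mathcal L_1(P),\mathcal L_2(P)]$, $\mathcal N(P)=\begin{bmatrix}\mathcal N_1(P)&\mathcal L_{12}(P)\\\mathcal L_{12}(P)^\top&\mathcal N_2(P)\end{bmatrix}$. *)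

theory Defs
  imports "HOL-Analysis.Analysis"
begin

text \<open>Matrices are d x d real matrices, represented as (real^'n^'n) (d = CARD('n)).
  The control dimension l equals d. Block matrices are indexed by 'n + 'n
  (Inl = first block, Inr = second block).\<close>

definition symm :: "(real^'n^'n) \<Rightarrow> bool" where
  "symm P \<longleftrightarrow> transpose P = P"

definition Mop :: "real \<Rightarrow> (real^'n^'n) \<Rightarrow> (real^'n^'n) \<Rightarrow> (real^'n^'n) \<Rightarrow> (real^'n^'n)" where
  "Mop \<gamma> A Q P = \<gamma> *\<^sub>R (transpose A ** P ** A) - P + Q"

definition Lop :: "real \<Rightarrow> (real^'n^'n) \<Rightarrow> (real^'n^'n) \<Rightarrow> (real^'n^'n) \<Rightarrow> (real^'n^'n) \<Rightarrow> (real^('n+'n)^'n)" where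
  "Lop \<gamma> A B1 B2 P =
     (let L1 = \<gamma> *\<^sub>R (transpose A ** P ** B1); L2 = \<gamma> *\<^sub>R (transpose A ** P ** B2)
      in \<chi> i j. (case j of Inl k \<Rightarrow> L1 $ i $ k | Inr k \<Rightarrow> L2 $ i $ k))"

definition Nop :: "real \<Rightarrow> (real^'n^'n) \<Rightarrow> (real^'n^'n) \<Rightarrow> (real^'n^'n) \<Rightarrow> (real^'n^'n)
                    \<Rightarrow> (real^'n^'n) \<Rightarrow> (real^('n+'n)^('n+'n))" where
  "Nop \<gamma> B1 B2 R1 R2 P =
     (let N1 = \<gamma> *\<^sub>R (transpose B1 ** P ** B1) + R1;
          N2 = \<gamma> *\<^sub>R (transpose B2 ** P ** B2) - R2;
          L12 = \<gamma> *\<^sub>R (transpose B1 ** P ** B2)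
      in \<chi> i j. (case i of
            Inl a \<Rightarrow> (case j of Inl b \<Rightarrow> N1 $ a $ b | Inr b \<Rightarrow> L12 $ a $ b)
          | Inr a \<Rightarrow> (case j of Inl b \<Rightarrow> transpose L12 $ a $ b | Inr b \<Rightarrow> N2 $ a $ b)))"

end

theory Submission
  imports Defs
begin

text \<open>Write \<open>B = [B1 B2]\<close>, \<open>R = diag(R1, -R2)\<close> and \<open>S = B R\<^sup>-\<^sup>1 B\<^sup>T\<close>, so that
  \<open>N(P) = R + \<gamma> B\<^sup>T P B\<close> and \<open>L(P) = \<gamma> A\<^sup>T P B\<close>. For \<open>P = P\<^sup>c\<close> the Woodbury identity gives
  \<open>P - \<gamma> P B N(P)\<^sup>-\<^sup>1 B\<^sup>T P = W\<close> with \<open>W = (P\<^sup>-\<^sup>1 + \<gamma> S)\<^sup>-\<^sup>1\<close>, so the Riccati residual is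
  \<open>\<gamma> A\<^sup>T W A - P + Q\<close>. The equation for \<open>P\<^sup>o\<close> reads \<open>P\<^sup>o = P (2\<gamma> A - \<gamma> S P\<^sup>o)\<close>, i.e.
  \<open>P\<^sup>o = 2\<gamma> W A\<close>, hence \<open>P = A\<^sup>T P\<^sup>o / 2 + Q = \<gamma> A\<^sup>T W A + Q\<close> and the residual vanishes.\<close>

lemma matrix_add_rdistrib:
  fixes A B :: "'a::semiring_1^'n^'m"
  shows "(A + B) ** C = A ** C + B ** C"
  by (simp add: vec_eq_iff matrix_matrix_mult_def distrib_right sum.distrib)

lemma matrix_diff_ldistrib:
  fixes A :: "'a::ring_1^'n^'m"
  shows "A ** (B - C) = A ** B - A ** C"
  by (simp add: vec_eq_iff matrix_matrix_mult_def right_diff_distrib sum_subtractf)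

lemma matrix_diff_rdistrib:
  fixes A B :: "'a::ring_1^'n^'m"
  shows "(A - B) ** C = A ** C - B ** C"
  by (simp add: vec_eq_iff matrix_matrix_mult_def left_diff_distrib sum_subtractf)

lemma matrix_neg_left:
  fixes A :: "'a::ring_1^'n^'m"
  shows "(- A) ** B = - (A ** B)"
  by (simp add: vec_eq_iff matrix_matrix_mult_def sum_negf)

lemma matrix_neg_right:
  fixes A :: "'a::ring_1^'n^'m"
  shows "A ** (- B) = - (A ** B)"
  by (simp add: vec_eq_iff matrix_matrix_mult_def sum_negf)

lemma matrix_scaleR_left:
  fixes A :: "'a::real_algebra_1^'n^'m"
  shows "(k *\<^sub>R A) ** B = k *\<^sub>R (A ** B)"
  by (simp add: scalar_matrix_assoc)

lemma matrix_scaleR_right: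
  fixes A :: "'a::real_algebra_1^'n^'m"
  shows "A ** (k *\<^sub>R B) = k *\<^sub>R (A ** B)"
  by (simp add: matrix_scalar_ac scalar_matrix_assoc)

lemma transpose_add: "transpose (A + B) = transpose A + transpose (B::'a::semiring_1^'n^'m)"
  by (simp add: vec_eq_iff transpose_def)

lemmas matrix_algebra_simps =
  matrix_add_ldistrib matrix_add_rdistrib matrix_diff_ldistrib matrix_diff_rdistrib
  matrix_neg_left matrix_neg_right matrix_scaleR_left matrix_scaleR_right matrix_mul_assoc

lemma
  fixes A :: "'a::semiring_1^'n^'m"
  assumes "invertible A"
  shows matrix_inv_right: "A ** matrix_inv A = mat 1"
    and matrix_inv_left: "matrix_inv A ** A = mat 1"
proof -
  have "A ** matrix_inv A = mat 1 \<and> matrix_inv A ** A = mat 1"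
    unfolding matrix_inv_def by (rule someI_ex) (use assms in \<open>simp add: invertible_def\<close>)
  then show "A ** matrix_inv A = mat 1" "matrix_inv A ** A = mat 1" by auto
qed

lemma matrix_inv_eqI:
  fixes A X :: "'a::field^'n^'n"
  assumes "A ** X = mat 1"
  shows "matrix_inv A = X"
proof -
  have "invertible A" using assms invertible_right_inverse by blast
  then have "matrix_inv A = matrix_inv A ** A ** X" by (simp flip: matrix_mul_assoc add: assms)
  then show ?thesis by (simp add: matrix_inv_left[OF \<open>invertible A\<close>])
qed

lemma
  fixes A :: "'a::field^'n^'n"
  assumes "invertible A"
  shows invertible_uminus: "invertible (- A)"
    and matrix_inv_uminus: "matrix_inv (- A) = - matrix_inv A"
proof -
  have *: "(- A) ** (- matrix_inv A) = mat 1"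
    by (simp add: matrix_neg_left matrix_neg_right matrix_inv_right[OF assms])
  then show "invertible (- A)"
    using invertible_right_inverse by blast
  from * show "matrix_inv (- A) = - matrix_inv A"
    by (rule matrix_inv_eqI)
qed

lemma fixed_point_eq_matrix_inv:
  fixes P S :: "real^'n^'n" and X Y :: "real^'k^'n"
  assumes "invertible P" and "invertible (matrix_inv P + S)" and "X = P ** (Y - S ** X)"
  shows "X = matrix_inv (matrix_inv P + S) ** Y"
proof -
  have "matrix_inv P ** X = Y - S ** X"
    by (subst assms(3)) (simp add: matrix_inv_left[OF assms(1)] matrix_mul_assoc)
  then have "(matrix_inv P + S) ** X = Y"
    by (simp add: matrix_add_rdistrib)
  then show ?thesis
    by (metis assms(2) matrix_inv_left matrix_mul_assoc matrix_mul_lid)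
qed

lemma woodbury_identity:
  fixes P :: "real^'n^'n" and R :: "real^'m^'m" and U :: "real^'m^'n" and V :: "real^'n^'m"
  assumes P: "invertible P" and R: "invertible R"
    and K: "invertible (matrix_inv P + U ** matrix_inv R ** V)"
  defines "W \<equiv> matrix_inv (matrix_inv P + U ** matrix_inv R ** V)"
  shows "invertible (R + V ** P ** U)"
    and "P - P ** U ** matrix_inv (R + V ** P ** U) ** V ** P = W"
proof -
  define Ri where "Ri = matrix_inv R"
  define K where "K = matrix_inv P + U ** Ri ** V"
  have KW: "K ** W = mat 1" "W ** K = mat 1"
    using matrix_inv_right[OF K] matrix_inv_left[OF K] by (simp_all add: K_def W_def Ri_def)
  have "P = P ** K ** W"
    using KW by (simp flip: matrix_mul_assoc)
  also have "P ** K = mat 1 + P ** U ** Ri ** V"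
    by (simp add: K_def matrix_add_ldistrib matrix_inv_right[OF P] matrix_mul_assoc)
  finally have PW: "P ** U ** Ri ** V ** W = P - W"
    by (simp add: matrix_add_rdistrib algebra_simps)
  have "P = W ** (K ** P)"
    using KW by (simp add: matrix_mul_assoc)
  also have "K ** P = mat 1 + U ** Ri ** V ** P"
    by (simp add: K_def matrix_add_rdistrib matrix_inv_left[OF P])
  finally have WP: "W ** U ** Ri ** V ** P = P - W"
    by (simp add: matrix_add_ldistrib matrix_mul_assoc algebra_simps)
  have PW': "Z ** P ** U ** Ri ** V ** W = Z ** (P - W)" for Z :: "real^'n^'k::finite"
    by (metis PW matrix_mul_assoc)
  define X where "X = Ri - Ri ** V ** W ** U ** Ri"
  have RX: "(R + V ** P ** U) ** X = mat 1"
    using matrix_inv_right[OF R] by (simp add: X_def Ri_def matrix_algebra_simps PW'[unfolded Ri_def])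
  show "invertible (R + V ** P ** U)"
    using RX invertible_right_inverse by blast
  show "P - P ** U ** matrix_inv (R + V ** P ** U) ** V ** P = W"
    by (simp add: matrix_inv_eqI[OF RX] X_def matrix_algebra_simps PW WP)
qed

lemma sum_UNIV_Plus:
  fixes f :: "'a::finite + 'b::finite \<Rightarrow> 'c::comm_monoid_add"
  shows "(\<Sum>x\<in>UNIV. f x) = (\<Sum>x\<in>UNIV. f (Inl x)) + (\<Sum>x\<in>UNIV. f (Inr x))"
  using sum.Plus[of UNIV UNIV f] by (simp add: comp_def)

definition block_row :: "'a^'k^'m \<Rightarrow> 'a^'l^'m \<Rightarrow> 'a^('k + 'l)^'m" where
  "block_row X Y = (\<chi> i j. case j of Inl k \<Rightarrow> X $ i $ k | Inr k \<Rightarrow> Y $ i $ k)"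

definition block_col :: "'a^'n^'k \<Rightarrow> 'a^'n^'l \<Rightarrow> 'a^'n^('k + 'l)" where
  "block_col X Y = (\<chi> i j. case i of Inl k \<Rightarrow> X $ k $ j | Inr k \<Rightarrow> Y $ k $ j)"

definition block_mat :: "'a^'k^'m \<Rightarrow> 'a^'l^'m \<Rightarrow> 'a^'k^'n \<Rightarrow> 'a^'l^'n \<Rightarrow> 'a^('k + 'l)^('m + 'n)" where
  "block_mat X11 X12 X21 X22 = (\<chi> i j. case i of
      Inl a \<Rightarrow> (case j of Inl b \<Rightarrow> X11 $ a $ b | Inr b \<Rightarrow> X12 $ a $ b)
    | Inr a \<Rightarrow> (case j of Inl b \<Rightarrow> X21 $ a $ b | Inr b \<Rightarrow> X22 $ a $ b))"

lemma transpose_block_row: "transpose (block_row X Y) = block_col (transpose X) (transpose Y)"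
  by (simp add: vec_eq_iff transpose_def block_row_def block_col_def split: sum.split)

lemma matrix_mult_block_row: "M ** block_row X Y = block_row (M ** X) (M ** Y)"
  by (simp add: vec_eq_iff matrix_matrix_mult_def block_row_def split: sum.split)

lemma block_col_mult: "block_col X Y ** M = block_col (X ** M) (Y ** M)"
  by (simp add: vec_eq_iff matrix_matrix_mult_def block_col_def split: sum.split)

lemma block_row_mult_block_col: "block_row X Y ** block_col U V = X ** U + Y ** V"
  by (simp add: vec_eq_iff matrix_matrix_mult_def block_row_def block_col_def sum_UNIV_Plus)

lemma block_col_mult_block_row:
  "block_col U V ** block_row X Y = block_mat (U ** X) (U ** Y) (V ** X) (V ** Y)"
  by (simp add: vec_eq_iff matrix_matrix_mult_def block_col_def block_row_def block_mat_def
      split: sum.split)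

lemma block_row_mult_block_mat:
  "block_row X Y ** block_mat A B C D = block_row (X ** A + Y ** C) (X ** B + Y ** D)"
  by (simp add: vec_eq_iff matrix_matrix_mult_def block_row_def block_mat_def sum_UNIV_Plus
      split: sum.split)

lemma block_mat_mult_block_mat:
  "block_mat A B C D ** block_mat E F G H
     = block_mat (A ** E + B ** G) (A ** F + B ** H) (C ** E + D ** G) (C ** F + D ** H)"
  by (simp add: vec_eq_iff matrix_matrix_mult_def block_mat_def sum_UNIV_Plus split: sum.split)

lemma scaleR_block_row: "c *\<^sub>R block_row X Y = block_row (c *\<^sub>R X) (c *\<^sub>R Y)"
  by (simp add: vec_eq_iff block_row_def split: sum.split)

lemma block_mat_add:
  "block_mat A B C D + block_mat E F G H = block_mat (A + E) (B + F) (C + G) (D + H)"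
  by (simp add: vec_eq_iff block_mat_def split: sum.split)

lemma scaleR_block_mat:
  "c *\<^sub>R block_mat A B C D = block_mat (c *\<^sub>R A) (c *\<^sub>R B) (c *\<^sub>R C) (c *\<^sub>R D)"
  by (simp add: vec_eq_iff block_mat_def split: sum.split)

lemma mat_1_block_mat: "mat 1 = block_mat (mat 1) 0 0 (mat 1)"
  by (simp add: vec_eq_iff mat_def block_mat_def split: sum.split)

lemma matrix_inv_block_diag:
  fixes X :: "'a::field^'k^'k" and Y :: "'a^'l^'l"
  assumes "invertible X" and "invertible Y"
  shows "invertible (block_mat X 0 0 Y)"
    and "matrix_inv (block_mat X 0 0 Y) = block_mat (matrix_inv X) 0 0 (matrix_inv Y)"
proof -
  have *: "block_mat X 0 0 Y ** block_mat (matrix_inv X) 0 0 (matrix_inv Y) = mat 1"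
    by (simp add: block_mat_mult_block_mat matrix_inv_right assms flip: mat_1_block_mat)
  show "invertible (block_mat X 0 0 Y)"
    using * invertible_right_inverse by blast
  show "matrix_inv (block_mat X 0 0 Y) = block_mat (matrix_inv X) 0 0 (matrix_inv Y)"
    using * by (rule matrix_inv_eqI)
qed

lemma block_row_inv_block_diag_transpose:
  fixes B1 B2 R1 R2 :: "real^'n^'n"
  assumes "invertible R1" and "invertible R2"
  shows "block_row B1 B2 ** matrix_inv (block_mat R1 0 0 (- R2)) ** transpose (block_row B1 B2)
    = B1 ** matrix_inv R1 ** transpose B1 - B2 ** matrix_inv R2 ** transpose B2"
  by (simp add: matrix_inv_block_diag(2) assms invertible_uminus matrix_inv_uminus
      transpose_block_row block_row_mult_block_mat block_row_mult_block_col
      matrix_neg_left matrix_neg_right)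

lemma Lop_block_row: "Lop \<gamma> A B1 B2 P = \<gamma> *\<^sub>R (transpose A ** P ** block_row B1 B2)"
proof -
  have "Lop \<gamma> A B1 B2 P
      = block_row (\<gamma> *\<^sub>R (transpose A ** P ** B1)) (\<gamma> *\<^sub>R (transpose A ** P ** B2))"
    unfolding Lop_def block_row_def Let_def ..
  then show ?thesis
    by (simp add: matrix_mult_block_row scaleR_block_row)
qed

lemma Nop_block_mat:
  assumes "transpose P = P"
  shows "Nop \<gamma> B1 B2 R1 R2 P
    = block_mat R1 0 0 (- R2) + transpose (block_row B1 B2) ** P ** (\<gamma> *\<^sub>R block_row B1 B2)"
proof -
  have "Nop \<gamma> B1 B2 R1 R2 P = block_mat (R1 + \<gamma> *\<^sub>R (transpose B1 ** P ** B1))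
      (\<gamma> *\<^sub>R (transpose B1 ** P ** B2)) (transpose (\<gamma> *\<^sub>R (transpose B1 ** P ** B2)))
      (\<gamma> *\<^sub>R (transpose B2 ** P ** B2) - R2)"
    unfolding Nop_def block_mat_def Let_def add.commute[of _ R1] ..
  also have "transpose (\<gamma> *\<^sub>R (transpose B1 ** P ** B2)) = \<gamma> *\<^sub>R (transpose B2 ** P ** B1)"
    by (simp add: transpose_scalar matrix_transpose_mul assms matrix_mul_assoc)
  finally show ?thesis
    by (simp add: transpose_block_row block_col_mult[of _ _ P] block_col_mult_block_row
        matrix_scaleR_right scaleR_block_mat block_mat_add)
qed

lemma riccati_residual_eq:
  fixes \<gamma> :: real and A B1 B2 P Q R1 R2 :: "real^'n^'n"
  assumes "transpose P = P"
  defines "B \<equiv> block_row B1 B2" and "N \<equiv> Nop \<gamma> B1 B2 R1 R2 P"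
  shows "Mop \<gamma> A Q P - Lop \<gamma> A B1 B2 P ** matrix_inv N ** transpose (Lop \<gamma> A B1 B2 P)
    = \<gamma> *\<^sub>R (transpose A ** (P - P ** (\<gamma> *\<^sub>R B) ** matrix_inv N ** transpose B ** P) ** A) - P + Q"
proof -
  have "transpose (Lop \<gamma> A B1 B2 P) = \<gamma> *\<^sub>R (transpose B ** P ** A)"
    by (simp add: Lop_block_row B_def transpose_scalar matrix_transpose_mul assms(1) matrix_mul_assoc)
  then show ?thesis
    by (simp add: Mop_def Lop_block_row flip: B_def) (simp add: matrix_algebra_simps algebra_simps)
qed

theorem mainTheorem15:
  fixes \<gamma> :: real
    and A B1 B1b B2 B2b Q R1 R1b R2 R2b Po :: "real^'n^'n"
  assumes "0 < \<gamma>" and "\<gamma> < 1"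
    and "symm Q" and "symm R1" and "symm R1b" and "symm R2" and "symm R2b"
    and "invertible B1" and "invertible B2" and "invertible R1" and "invertible R2"
    and "invertible (B1 + B1b)" and "invertible (B2 + B2b)"
    and "invertible (R1 + R1b)" and "invertible (R2 + R2b)"
    and Po_eq: "Po = \<gamma> *\<^sub>R ((transpose A ** Po + 2 *\<^sub>R Q) **
              (A + (B1 ** ((- 1/2) *\<^sub>R (matrix_inv R1 ** transpose B1))
                    + B2 ** ((1/2) *\<^sub>R (matrix_inv R2 ** transpose B2))) ** Po))"
    and "transpose A ** Po = transpose Po ** A"
    and "invertible ((1/2) *\<^sub>R (transpose A ** Po) + Q)"
    and "invertible (matrix_inv ((1/2) *\<^sub>R (transpose A ** Po) + Q)
            + \<gamma> *\<^sub>R (B1 ** matrix_inv R1 ** transpose B1 - B2 ** matrix_inv R2 ** transpose B2))"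
  shows "let Pc = (1/2) *\<^sub>R (transpose A ** Po) + Q in
           symm Pc \<and> invertible (Nop \<gamma> B1 B2 R1 R2 Pc) \<and>
           Mop \<gamma> A Q Pc - Lop \<gamma> A B1 B2 Pc ** matrix_inv (Nop \<gamma> B1 B2 R1 R2 Pc)
             ** transpose (Lop \<gamma> A B1 B2 Pc) = 0"
proof -
  define P where "P = (1/2) *\<^sub>R (transpose A ** Po) + Q"
  define S where "S = B1 ** matrix_inv R1 ** transpose B1 - B2 ** matrix_inv R2 ** transpose B2"
  define W where "W = matrix_inv (matrix_inv P + \<gamma> *\<^sub>R S)"
  define B where "B = block_row B1 B2"
  define Rd where "Rd = block_mat R1 0 0 (- R2)"
  have P_sym: "transpose P = P"
    using assms(3,17) by (simp add: P_def transpose_add transpose_scalar matrix_transpose_mul symm_def)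
  have P_inv: "invertible P" and K_inv: "invertible (matrix_inv P + \<gamma> *\<^sub>R S)"
    using assms(18,19) by (simp_all flip: P_def S_def)
  have Rd_inv: "invertible Rd"
    unfolding Rd_def by (intro matrix_inv_block_diag(1) assms(10) invertible_uminus assms(11))
  have BRB: "(\<gamma> *\<^sub>R B) ** matrix_inv Rd ** transpose B = \<gamma> *\<^sub>R S"
    unfolding Rd_def B_def S_def
    by (simp add: matrix_scaleR_left block_row_inv_block_diag_transpose assms(10,11))
  have N: "Nop \<gamma> B1 B2 R1 R2 P = Rd + transpose B ** P ** (\<gamma> *\<^sub>R B)"
    unfolding Rd_def B_def by (rule Nop_block_mat[OF P_sym])
  note woodbury = woodbury_identity[OF P_inv Rd_inv, of "\<gamma> *\<^sub>R B" "transpose B",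
      unfolded BRB, OF K_inv, folded W_def N]
  have "Po = P ** ((2 * \<gamma>) *\<^sub>R A - (\<gamma> *\<^sub>R S) ** Po)"
    by (subst Po_eq) (simp add: P_def S_def matrix_algebra_simps algebra_simps)
  then have "Po = W ** ((2 * \<gamma>) *\<^sub>R A)"
    unfolding W_def by (rule fixed_point_eq_matrix_inv[OF P_inv K_inv])
  then have P_eq: "P = \<gamma> *\<^sub>R (transpose A ** W ** A) + Q"
    by (simp add: P_def matrix_algebra_simps)
  have "Mop \<gamma> A Q P - Lop \<gamma> A B1 B2 P ** matrix_inv (Nop \<gamma> B1 B2 R1 R2 P)
      ** transpose (Lop \<gamma> A B1 B2 P) = \<gamma> *\<^sub>R (transpose A ** W ** A) - P + Q"
    unfolding riccati_residual_eq[OF P_sym] B_def[symmetric] woodbury(2)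
    by (simp add: matrix_algebra_simps)
  then show ?thesis
    using P_sym woodbury(1) P_eq by (simp add: Let_def symm_def flip: P_def)
qed

end
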